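(* Call-by-name coupled logical bisimilarity coincides with the contextual equivalences: $(\approx^n_1,\approx^n_2)=(\simeq^n,\cong^n)$. Consequently, both components coincide with each other: $\approx^n_1=\simeq^n=\cong^n=\approx^n_2$.
   Context: $\Lambda^\bullet$ is the set of closed $\lambda$-terms. Contexts are generated by $C::=x\mid[\cdot]\mid C\,C\mid\lambda x.C$, possibly with several holes numbered left to right; $C[\widetilde M]$ fills the $i$-th hole with $M_i$; $C[M]$ fills every hole with $M$. For $\mathcal{R}\subseteq\Lambda^\bullet\times\Lambda^\bullet$, $\mathcal{R}^\star=\{(C[\widetilde M],C[\widetilde N]) : C\text{ a context},\ M_i\,\mathcal{R}\,N_i\ \forall i,\ C[\widetilde M],C[\widetilde N]\in\Lambda^\bullet\}$. Call-by-name reduction on closed terms: $MN\longrightarrow M'N$ if $M\longrightarrow M'$, and $(\lambda x.P)N\longrightarrow P[N/x]$; $\Longrightarrow$ is its reflexive transitive closure; values are closed abstractions; $M{\Downarrow}$ means $M\Longrightarrow V$ for some value $V$. Contextual equivalence: $M\simeq^n N$ iff for all contexts $C$ with $C[M],C[N]$ closed, $C[M]{\Downarrow}\iff C[N]{\Downarrow}$. Evaluation contexts $\mathcal{E}::=[\cdot]\mid\mathcal{E}\,M$ ($M\in\Lambda^\bullet$); $M\cong^n N$ iff for all evaluation contexts $\mathcal{E}$, $\mathcal{E}[M]{\Downarrow}\iff\mathcal{E}[N]{\Downarrow}$. A coupled relation is a pair $(\mathcal{R}_1,\mathcal{R}_2)$ of relations on $\Lambda^\bullet$ with $\mathcal{R}_1\subseteq\mathcal{R}_2$.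 It is a (call-by-name) coupled logical bisimulation if whenever $M\,\mathcal{R}_2\,N$: (1) if $M\longrightarrow M'$ then there is $N'$ with $N\Longrightarrow N'$ and $M'\,\mathcal{R}_2\,N'$; (2) if $M=\lambda x.M'$ then $N\Longrightarrow\lambda x.N'$ for some $N'$ and for all $P,Q\in\Lambda^\bullet$ with $P\,\mathcal{R}_1^\star\,Q$, $M'[P/x]\,\mathcal{R}_2\,N'[Q/x]$; (3) the converses of (1),(2) with $M$ and $N$ exchanged. Coupled logical bisimilarity $(\approx^n_1,\approx^n_2)$ is the componentwise union of all such bisimulations. *)

theory Defs
  imports Main
begin

datatype trm = Var nat | App trm trm | Lam trm

fun closed_at :: "nat \<Rightarrow> trm \<Rightarrow> bool" where
  "closed_at n (Var k) = (k < n)"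
| "closed_at n (App M N) = (closed_at n M \<and> closed_at n N)"
| "closed_at n (Lam M) = closed_at (Suc n) M"

definition closed :: "trm \<Rightarrow> bool" where
  "closed M = closed_at 0 M"

(* substitution of a CLOSED term P for index n (no lifting of P needed since P is closed) *)
fun subst :: "trm \<Rightarrow> nat \<Rightarrow> trm \<Rightarrow> trm" where
  "subst (Var k) n P = (if k < n then Var k else if k = n then P else Var (k - 1))"
| "subst (App M N) n P = App (subst M n P) (subst N n P)"
| "subst (Lam M) n P = Lam (subst M (Suc n) P)"

(* M'[P/x] for the body M' of an abstraction *)
definition inst :: "trm \<Rightarrow> trm \<Rightarrow> trm" where
  "inst M P = subst M 0 P"

datatype ctx = CVar nat | Hole | CApp ctx ctx | CLam ctx

fun nholes :: "ctx \<Rightarrow> nat" where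
  "nholes (CVar k) = 0"
| "nholes Hole = 1"
| "nholes (CApp C D) = nholes C + nholes D"
| "nholes (CLam C) = nholes C"

(* C[M1,...,Mk]: fills the i-th hole (left to right) with the i-th term *)
fun fill :: "ctx \<Rightarrow> trm list \<Rightarrow> trm" where
  "fill (CVar k) Ms = Var k"
| "fill Hole Ms = hd Ms"
| "fill (CApp C D) Ms = App (fill C (take (nholes C) Ms)) (fill D (drop (nholes C) Ms))"
| "fill (CLam C) Ms = Lam (fill C Ms)"

definition fill1 :: "ctx \<Rightarrow> trm \<Rightarrow> trm" where
  "fill1 C M = fill C (replicate (nholes C) M)"

definition ctx_closure :: "trm rel \<Rightarrow> trm rel" where
  "ctx_closure R = {(fill C Ms, fill C Ns) | C Ms Ns.
      length Ms = nholes C \<and> length Ns = nholes C \<and>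
      list_all2 (\<lambda>M N. (M, N) \<in> R) Ms Ns \<and>
      closed (fill C Ms) \<and> closed (fill C Ns)}"

inductive red :: "trm \<Rightarrow> trm \<Rightarrow> bool" where
  red_app: "red M M' \<Longrightarrow> red (App M N) (App M' N)"
| red_beta: "red (App (Lam P) N) (inst P N)"

abbreviation reds :: "trm \<Rightarrow> trm \<Rightarrow> bool" where
  "reds \<equiv> red\<^sup>*\<^sup>*"

definition is_value :: "trm \<Rightarrow> bool" where
  "is_value V = (closed V \<and> (\<exists>B. V = Lam B))"

definition converges :: "trm \<Rightarrow> bool" where
  "converges M = (\<exists>V. reds M V \<and> is_value V)"

definition ctx_equiv :: "trm rel" where
  "ctx_equiv = {(M, N). closed M \<and> closed N \<and>
     (\<forall>C. closed (fill1 C M) \<and> closed (fill1 C N) \<longrightarrow>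
          (converges (fill1 C M) \<longleftrightarrow> converges (fill1 C N)))}"

(* evaluation contexts: E = [.] M1 ... Mk with closed Mi *)
definition eval_ctx_fill :: "trm list \<Rightarrow> trm \<Rightarrow> trm" where
  "eval_ctx_fill Ps M = foldl App M Ps"

definition eval_equiv :: "trm rel" where
  "eval_equiv = {(M, N). closed M \<and> closed N \<and>
     (\<forall>Ps. (\<forall>P\<in>set Ps. closed P) \<longrightarrow>
          (converges (eval_ctx_fill Ps M) \<longleftrightarrow> converges (eval_ctx_fill Ps N)))}"

definition coupled_lb :: "trm rel \<Rightarrow> trm rel \<Rightarrow> bool" where
  "coupled_lb R1 R2 \<longleftrightarrow>
     R1 \<subseteq> R2 \<and> (\<forall>(M, N)\<in>R2. closed M \<and> closed N) \<and>
     (\<forall>M N. (M, N) \<in> R2 \<longrightarrow>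
        (\<forall>M'. red M M' \<longrightarrow> (\<exists>N'. reds N N' \<and> (M', N') \<in> R2)) \<and>
        (\<forall>M'. M = Lam M' \<longrightarrow> (\<exists>N'. reds N (Lam N') \<and>
             (\<forall>P Q. (P, Q) \<in> ctx_closure R1 \<longrightarrow> (inst M' P, inst N' Q) \<in> R2))) \<and>
        (\<forall>N'. red N N' \<longrightarrow> (\<exists>M'. reds M M' \<and> (M', N') \<in> R2)) \<and>
        (\<forall>N'. N = Lam N' \<longrightarrow> (\<exists>M'. reds M (Lam M') \<and>
             (\<forall>P Q. (P, Q) \<in> ctx_closure R1 \<longrightarrow> (inst M' P, inst N' Q) \<in> R2))))"

definition approx1 :: "trm rel" where
  "approx1 = \<Union>{R1. \<exists>R2. coupled_lb R1 R2}"

definition approx2 :: "trm rel" where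
  "approx2 = \<Union>{R2. \<exists>R1. coupled_lb R1 R2}"

end

theory Submission
  imports Defs
begin

(*
  The proof goes through eval_equiv, which tests a closed term only in applicative contexts
  [.] P1 ... Pk, i.e. on spines foldl App M Ps.
   * Context lemma: eval_equiv is a congruence.  Relating two terms that differ only at
     positions filled with eval_equiv-related pairs (the relation ctx_rel), we show by
     induction on the length of a converging reduction, the number of such positions and
     the size of the term, that convergence of one spine implies convergence of the other.
     Hence ctx_equiv = eval_equiv.
   * Completeness: (eval_equiv, eval_equiv) is itself a coupled logical bisimulation, so
     eval_equiv is contained in approx1.
   * Soundness: the second component of every coupled logical bisimulation is, in both
     directions, an applicative simulation, and applicative simulations preserve
     convergence of spines; hence approx2 is contained in eval_equiv.
  Together with approx1 <= approx2 this closes the cycle of inclusions.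
*)

lemma closed_at_mono: "closed_at m M \<Longrightarrow> m \<le> k \<Longrightarrow> closed_at k M"
  by (induction M arbitrary: m k) auto

lemma closed_at_if_closed: "closed M \<Longrightarrow> closed_at k M"
  unfolding closed_def using closed_at_mono by blast

lemma subst_closed_at: "closed_at k M \<Longrightarrow> k \<le> n \<Longrightarrow> subst M n P = M"
  by (induction M arbitrary: k n) auto

lemma closed_at_subst:
  "closed_at (Suc k) M \<Longrightarrow> n \<le> k \<Longrightarrow> closed P \<Longrightarrow> closed_at k (subst M n P)"
  by (induction M arbitrary: k n) (auto simp: closed_at_if_closed)

lemma closed_inst: "closed (Lam B) \<Longrightarrow> closed P \<Longrightarrow> closed (inst B P)"
  by (simp add: closed_def inst_def closed_at_subst)

lemma red_closed: "red M M' \<Longrightarrow> closed M \<Longrightarrow> closed M'"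
  by (induction rule: red.induct) (auto simp: closed_def intro: closed_inst[unfolded closed_def])

lemma reds_closed: "reds M M' \<Longrightarrow> closed M \<Longrightarrow> closed M'"
  by (induction rule: rtranclp_induct) (auto intro: red_closed)

lemma Lam_normal: "\<not> red (Lam B) X"
  by (auto elim: red.cases)

lemma red_det: "red M A \<Longrightarrow> red M B \<Longrightarrow> A = B"
proof (induction arbitrary: B rule: red.induct)
  case (red_app M M' N)
  from red_app.prems show ?case
    by cases (use red_app.IH red_app.hyps Lam_normal in auto)
next
  case (red_beta P N)
  then show ?case by cases (auto simp: Lam_normal)
qed

lemma progress: "closed M \<Longrightarrow> (\<exists>B. M = Lam B) \<or> (\<exists>M'. red M M')"
  unfolding closed_def
proof (induction M)
  case (App M1 M2)
  then show ?case by (metis closed_at.simps(2) red.red_app red.red_beta)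
qed auto

lemma red_spine: "red M M' \<Longrightarrow> red (foldl App M Ps) (foldl App M' Ps)"
  by (induction Ps arbitrary: M M') (simp_all add: red.red_app)

lemma reds_spine: "reds M M' \<Longrightarrow> reds (foldl App M Ps) (foldl App M' Ps)"
  by (induction rule: rtranclp_induct) (auto intro: red_spine rtranclp.rtrancl_into_rtrancl)

lemma red_spine_beta: "red (foldl App (Lam B) (P # Ps)) (foldl App (inst B P) Ps)"
  using red_spine[OF red.red_beta] by simp

lemma closed_spine: "closed (foldl App M Ps) \<longleftrightarrow> closed M \<and> (\<forall>P\<in>set Ps. closed P)"
  by (induction Ps arbitrary: M) (auto simp: closed_def)

lemma converges_Lam: "closed (Lam B) \<Longrightarrow> converges (Lam B)"
  by (auto simp: converges_def is_value_def)

(* by determinism, convergence is invariant under reduction *)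
lemma converges_red_iff: "red M M' \<Longrightarrow> converges M \<longleftrightarrow> converges M'"
proof
  assume r: "red M M'" and "converges M"
  then obtain V where V: "reds M V" "is_value V" by (auto simp: converges_def)
  then show "converges M'"
  proof (cases rule: converse_rtranclpE)
    case (step Y)
    then have "Y = M'" using red_det r by blast
    then show ?thesis using step V(2) by (auto simp: converges_def)
  qed (use r Lam_normal is_value_def in auto)
qed (auto simp: converges_def intro: converse_rtranclp_into_rtranclp)

lemma converges_reds_iff: "reds M M' \<Longrightarrow> converges M \<longleftrightarrow> converges M'"
  by (induction rule: rtranclp_induct) (simp_all add: converges_red_iff)

lemma red_pow_det:
  assumes "(red ^^ n) M V" "is_value V" "red M M'"
  shows "\<exists>m. n = Suc m \<and> (red ^^ m) M' V"
proof (cases n)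
  case 0
  then show ?thesis using assms Lam_normal by (auto simp: is_value_def)
next
  case (Suc m)
  with assms(1) have "(red ^^ Suc m) M V" by simp
  then obtain Y where "red M Y" "(red ^^ m) Y V" by (rule relpowp_Suc_E2)
  then show ?thesis using Suc red_det[OF _ assms(3)] by auto
qed

lemma converges_pow: "converges M \<longleftrightarrow> (\<exists>n V. (red ^^ n) M V \<and> is_value V)"
  by (auto simp: converges_def rtranclp_power)

lemma eval_equiv_iff:
  "(M, N) \<in> eval_equiv \<longleftrightarrow> closed M \<and> closed N \<and>
     (\<forall>Ps. (\<forall>P\<in>set Ps. closed P) \<longrightarrow>
        (converges (foldl App M Ps) \<longleftrightarrow> converges (foldl App N Ps)))"
  by (simp add: eval_equiv_def eval_ctx_fill_def)

lemma eval_equiv_converges: "(M, N) \<in> eval_equiv \<Longrightarrow> converges M \<longleftrightarrow> converges N"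
  unfolding eval_equiv_iff by (metis empty_iff foldl_Nil list.set(1))

lemma eval_equiv_closed: "\<forall>(M, N)\<in>eval_equiv. closed M \<and> closed N"
  by (auto simp: eval_equiv_iff)

lemma eval_equiv_sym: "sym eval_equiv"
  by (auto simp: sym_def eval_equiv_iff)

lemma eval_equiv_symD: "(M, N) \<in> eval_equiv \<Longrightarrow> (N, M) \<in> eval_equiv"
  by (simp add: eval_equiv_iff)

lemma eval_equiv_trans: "(L, M) \<in> eval_equiv \<Longrightarrow> (M, N) \<in> eval_equiv \<Longrightarrow> (L, N) \<in> eval_equiv"
  by (simp add: eval_equiv_iff)

subsection \<open>Terms differing at positions filled by related terms\<close>

text \<open>The number of holes is recorded because it
  is a component of the termination measure of the context lemma.\<close>

inductive ctx_rel :: "trm rel \<Rightarrow> nat \<Rightarrow> trm \<Rightarrow> trm \<Rightarrow> bool" for R where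
  crVar: "ctx_rel R 0 (Var k) (Var k)"
| crApp: "ctx_rel R a M N \<Longrightarrow> ctx_rel R b M' N' \<Longrightarrow> ctx_rel R (a + b) (App M M') (App N N')"
| crLam: "ctx_rel R a M N \<Longrightarrow> ctx_rel R a (Lam M) (Lam N)"
| crHole: "(M, N) \<in> R \<Longrightarrow> ctx_rel R 1 M N"

inductive ctx_rels :: "trm rel \<Rightarrow> nat \<Rightarrow> trm list \<Rightarrow> trm list \<Rightarrow> bool" for R where
  crsNil: "ctx_rels R 0 [] []"
| crsCons: "ctx_rel R a P Q \<Longrightarrow> ctx_rels R b Ps Qs \<Longrightarrow> ctx_rels R (a + b) (P # Ps) (Q # Qs)"

lemma ctx_rel_refl: "ctx_rel R 0 M M"
  by (induction M) (auto intro: ctx_rel.intros ctx_rel.crApp[where a = 0 and b = 0, simplified])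

lemma ctx_rels_refl: "ctx_rels R 0 Ps Ps"
  by (induction Ps) (auto intro: ctx_rels.intros ctx_rels.crsCons[OF ctx_rel_refl, where b = 0, simplified])

lemma ctx_rel_sym: "ctx_rel R h M N \<Longrightarrow> sym R \<Longrightarrow> ctx_rel R h N M"
proof (induction rule: ctx_rel.induct)
  case (crHole M N)
  then show ?case by (metis ctx_rel.crHole symD)
qed (auto intro: ctx_rel.intros)

lemma ctx_rel_closed_at:
  "ctx_rel R h M N \<Longrightarrow> \<forall>(P, Q)\<in>R. closed P \<and> closed Q \<Longrightarrow> closed_at k M = closed_at k N"
proof (induction arbitrary: k rule: ctx_rel.induct)
  case (crHole M N)
  then have "closed M" "closed N" by auto
  then show ?case by (simp add: closed_at_if_closed)
qed auto

lemma ctx_rels_closed: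
  "ctx_rels R g Ps Qs \<Longrightarrow> \<forall>(P, Q)\<in>R. closed P \<and> closed Q \<Longrightarrow> \<forall>P\<in>set Ps. closed P \<Longrightarrow>
   \<forall>Q\<in>set Qs. closed Q"
proof (induction rule: ctx_rels.induct)
  case (crsCons a P Q b Ps Qs)
  have P: "closed P" and Ps: "\<forall>P\<in>set Ps. closed P" using crsCons.prems(2) by simp_all
  have "closed Q"
    using P ctx_rel_closed_at[OF crsCons.hyps(1) crsCons.prems(1), of 0] unfolding closed_def by simp
  then show ?case using crsCons.IH[OF crsCons.prems(1) Ps] by simp
qed simp

lemma ctx_rel_subst:
  assumes "ctx_rel R h M N" "\<forall>(P, Q)\<in>R. closed P \<and> closed Q" "ctx_rel R g P Q"
  shows "\<exists>c. ctx_rel R c (subst M k P) (subst N k Q)"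
  using assms(1)
proof (induction arbitrary: k rule: ctx_rel.induct)
  case (crVar j)
  then show ?case using assms(3) by (auto intro: ctx_rel.crVar)
next
  case (crApp a M N b M' N')
  then show ?case by (fastforce intro: ctx_rel.crApp)
next
  case (crLam a M N)
  then show ?case by (fastforce intro: ctx_rel.crLam)
next
  case (crHole M N)
  then have "subst M k P = M" "subst N k Q = N"
    using assms(2) subst_closed_at[of 0] by (auto simp: closed_def)
  then show ?case using ctx_rel.crHole[OF crHole] by metis
qed

lemma ctx_rel_fill:
  "length Ms = nholes C \<Longrightarrow> length Ns = nholes C \<Longrightarrow> list_all2 (\<lambda>M N. (M, N) \<in> R) Ms Ns \<Longrightarrow>
   \<exists>h. ctx_rel R h (fill C Ms) (fill C Ns)"
proof (induction C arbitrary: Ms Ns)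
  case Hole
  then obtain M N where "Ms = [M]" "Ns = [N]" by (auto simp: length_Suc_conv)
  then show ?case using Hole ctx_rel.crHole by auto
next
  case (CApp C1 C2)
  have "\<exists>h. ctx_rel R h (fill C1 (take (nholes C1) Ms)) (fill C1 (take (nholes C1) Ns))"
    using CApp.IH(1) CApp.prems by simp
  moreover have "\<exists>h. ctx_rel R h (fill C2 (drop (nholes C1) Ms)) (fill C2 (drop (nholes C1) Ns))"
    using CApp.IH(2) CApp.prems by simp
  ultimately show ?case using ctx_rel.crApp by fastforce
next
  case (CLam C)
  then show ?case by (fastforce intro: ctx_rel.crLam)
qed (auto intro: ctx_rel.crVar)

lemma ctx_closure_ctx_rel:
  "(P, Q) \<in> ctx_closure R \<Longrightarrow> closed P \<and> closed Q \<and> (\<exists>h. ctx_rel R h P Q)"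
  unfolding ctx_closure_def using ctx_rel_fill by blast

subsection \<open>The context lemma\<close>

text \<open>The measure is (length of the reduction, number of holes, size of
  the head): a beta step shortens the reduction, moving an argument of an application into
  the spine shrinks the head, and replacing a hole by its \<open>eval_equiv\<close>-partner removes a hole.\<close>

lemma context_lemma_spine:
  assumes "(red ^^ n) (foldl App M Ps) V" "is_value V" "closed (foldl App M Ps)"
    and "ctx_rel eval_equiv h M N" "ctx_rels eval_equiv g Ps Qs"
  shows "converges (foldl App N Qs)"
  using assms
proof (induction "(n, h + g, size M)" arbitrary: n h g M N Ps Qs
    rule: wf_induct_rule[OF wf_lex_prod[OF wf_less_than wf_lex_prod[OF wf_less_than wf_less_than]]])
  case (1 n h g M N Ps Qs)
  note red_n = "1.prems"(1) and is_val = "1.prems"(2) and closed = "1.prems"(3)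
  from "1.prems"(4) show ?case
  proof cases
    case (crVar k)
    then have "closed (Var k)" using closed closed_spine by blast
    then show ?thesis by (simp add: closed_def)
  next
    case (crApp a M1 N1 b M2 N2)
    have "ctx_rels eval_equiv (b + g) (M2 # Ps) (N2 # Qs)"
      using ctx_rels.crsCons[OF crApp(5) "1.prems"(5)] .
    then show ?thesis
      using "1.hyps"[of n a "b + g" M1 "M2 # Ps" N1 "N2 # Qs"] crApp red_n is_val closed by simp
  next
    case (crLam B B')
    show ?thesis
    proof (cases Ps)
      case Nil
      then have "Qs = []" using "1.prems"(5) by (auto elim: ctx_rels.cases)
      moreover have "closed N"
        using ctx_rel_closed_at[OF "1.prems"(4) eval_equiv_closed] closed Nil by (simp add: closed_def)
      ultimately show ?thesis using crLam converges_Lam by simp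
    next
      case (Cons P Ps')
      from "1.prems"(5)[unfolded Cons] obtain c d Q Qs' where Qs: "Qs = Q # Qs'" "g = c + d"
        "ctx_rel eval_equiv c P Q" "ctx_rels eval_equiv d Ps' Qs'"
        by (auto elim: ctx_rels.cases)
      have step: "red (foldl App M Ps) (foldl App (inst B P) Ps')"
        using red_spine_beta crLam Cons by simp
      obtain m where m: "n = Suc m" "(red ^^ m) (foldl App (inst B P) Ps') V"
        using red_pow_det[OF red_n is_val step] by blast
      obtain e where "ctx_rel eval_equiv e (inst B P) (inst B' Q)"
        using ctx_rel_subst[OF crLam(3) eval_equiv_closed Qs(3)] unfolding inst_def by blast
      then have "converges (foldl App (inst B' Q) Qs')"
        using "1.hyps"[of m e d "inst B P" Ps' "inst B' Q" Qs'] m is_val Qs(4) red_closed[OF step closed]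
        by simp
      moreover have "red (foldl App N Qs) (foldl App (inst B' Q) Qs')"
        using red_spine_beta crLam Qs by simp
      ultimately show ?thesis using converges_red_iff by blast
    qed
  next
    case crHole
    have "converges (foldl App M Qs)"
      using "1.hyps"[of n 0 g M Ps M Qs] crHole red_n is_val closed ctx_rel_refl "1.prems"(5) by simp
    moreover have "\<forall>Q\<in>set Qs. closed Q"
      using ctx_rels_closed[OF "1.prems"(5) eval_equiv_closed] closed closed_spine by blast
    ultimately show ?thesis using crHole(2) unfolding eval_equiv_iff by blast
  qed
qed

lemma context_lemma:
  assumes "ctx_rel eval_equiv h M N" "closed M" "closed N"
  shows "(M, N) \<in> eval_equiv"
proof -
  have transfer: "converges (foldl App N' Ps)"
    if rel: "ctx_rel eval_equiv h M' N'" and closed: "closed M'" "\<forall>P\<in>set Ps. closed P"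
      and conv: "converges (foldl App M' Ps)"
    for M' N' Ps
  proof -
    obtain n V where "(red ^^ n) (foldl App M' Ps) V" "is_value V"
      using conv converges_pow by blast
    then show ?thesis
      using context_lemma_spine[OF _ _ _ rel ctx_rels_refl] closed closed_spine by blast
  qed
  show ?thesis
    unfolding eval_equiv_iff using assms transfer ctx_rel_sym[OF assms(1) eval_equiv_sym] by blast
qed

subsection \<open>Contextual equivalence coincides with evaluation-context equivalence\<close>

fun term_ctx :: "trm \<Rightarrow> ctx" where
  "term_ctx (Var k) = CVar k"
| "term_ctx (App M N) = CApp (term_ctx M) (term_ctx N)"
| "term_ctx (Lam M) = CLam (term_ctx M)"

lemma nholes_term_ctx [simp]: "nholes (term_ctx P) = 0"
  by (induction P) auto

lemma fill_term_ctx [simp]: "fill (term_ctx P) Ms = P"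
  by (induction P arbitrary: Ms) auto

definition spine_ctx :: "trm list \<Rightarrow> ctx" where
  "spine_ctx Ps = foldl (\<lambda>C P. CApp C (term_ctx P)) Hole Ps"

lemma fill1_spine_ctx: "fill1 (spine_ctx Ps) M = foldl App M Ps"
proof -
  have "nholes (spine_ctx Ps) = 1 \<and> fill (spine_ctx Ps) [M] = foldl App M Ps"
    by (induction Ps rule: rev_induct) (simp_all add: spine_ctx_def)
  then show ?thesis by (simp add: fill1_def)
qed

lemma ctx_equiv_sub_eval_equiv: "ctx_equiv \<subseteq> eval_equiv"
proof clarify
  fix M N assume MN: "(M, N) \<in> ctx_equiv"
  have closed: "closed M" "closed N" using MN by (simp_all add: ctx_equiv_def)
  have "converges (foldl App M Ps) \<longleftrightarrow> converges (foldl App N Ps)" if "\<forall>P\<in>set Ps. closed P" for Ps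
  proof -
    have "closed (fill1 C M) \<and> closed (fill1 C N) \<longrightarrow> (converges (fill1 C M) \<longleftrightarrow> converges (fill1 C N))"
      for C using MN by (simp add: ctx_equiv_def)
    from this[of "spine_ctx Ps"] show ?thesis
      using closed that by (simp add: fill1_spine_ctx closed_spine)
  qed
  then show "(M, N) \<in> eval_equiv" unfolding eval_equiv_iff using closed by blast
qed

lemma eval_equiv_sub_ctx_equiv: "eval_equiv \<subseteq> ctx_equiv"
proof clarify
  fix M N assume MN: "(M, N) \<in> eval_equiv"
  have "converges (fill1 C M) \<longleftrightarrow> converges (fill1 C N)"
    if "closed (fill1 C M)" "closed (fill1 C N)" for C
  proof -
    have "list_all2 (\<lambda>M N. (M, N) \<in> eval_equiv) (replicate (nholes C) M) (replicate (nholes C) N)"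
      using MN by (simp add: list_all2_conv_all_nth)
    then obtain h where "ctx_rel eval_equiv h (fill1 C M) (fill1 C N)"
      using ctx_rel_fill unfolding fill1_def by fastforce
    then show ?thesis using context_lemma that eval_equiv_converges by blast
  qed
  moreover have "closed M" "closed N" using MN by (simp_all add: eval_equiv_iff)
  ultimately show "(M, N) \<in> ctx_equiv" by (simp add: ctx_equiv_def)
qed

subsection \<open>Completeness: evaluation-context equivalence is a coupled logical bisimulation\<close>

lemma reds_eval_equiv: "reds M M' \<Longrightarrow> closed M \<Longrightarrow> (M, M') \<in> eval_equiv"
  using converges_reds_iff[OF reds_spine] by (auto simp: eval_equiv_iff reds_closed)

lemma eval_equiv_red:
  assumes MN: "(M, N) \<in> eval_equiv" and step: "red M M'"
  shows "(M', N) \<in> eval_equiv"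
proof -
  have "closed M" using MN eval_equiv_iff by blast
  then have "(M', M) \<in> eval_equiv"
    using eval_equiv_symD[OF reds_eval_equiv[OF r_into_rtranclp[of red, OF step]]] by blast
  then show ?thesis using eval_equiv_trans MN by blast
qed

lemma eval_equiv_App: "(M, N) \<in> eval_equiv \<Longrightarrow> closed Q \<Longrightarrow> (App M Q, App N Q) \<in> eval_equiv"
  unfolding eval_equiv_iff closed_def by (metis closed_at.simps(2) foldl_Cons list.set_intros set_ConsD)

lemma eval_equiv_Lam:
  assumes "(Lam B, N) \<in> eval_equiv"
  shows "\<exists>B'. reds N (Lam B') \<and>
           (\<forall>P Q. (P, Q) \<in> ctx_closure eval_equiv \<longrightarrow> (inst B P, inst B' Q) \<in> eval_equiv)"
proof -
  have closed: "closed (Lam B)" "closed N" using assms by (auto simp: eval_equiv_iff)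
  have "converges N"
    using eval_equiv_converges[OF assms] converges_Lam[OF closed(1)] by blast
  then obtain B' where N_eval: "reds N (Lam B')"
    by (auto simp: converges_def is_value_def)
  have "(inst B P, inst B' Q) \<in> eval_equiv" if PQ_closure: "(P, Q) \<in> ctx_closure eval_equiv" for P Q
  proof -
    obtain h where PQ: "closed P" "closed Q" "ctx_rel eval_equiv h P Q"
      using ctx_closure_ctx_rel[OF PQ_closure] by blast
    obtain c where "ctx_rel eval_equiv c (inst B P) (inst B Q)"
      using ctx_rel_subst[OF ctx_rel_refl eval_equiv_closed PQ(3)] unfolding inst_def by blast
    then have "(inst B P, inst B Q) \<in> eval_equiv"
      using context_lemma closed_inst[OF closed(1) PQ(1)] closed_inst[OF closed(1) PQ(2)] by blast
    moreover have "(inst B Q, App (Lam B) Q) \<in> eval_equiv"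
      using eval_equiv_symD[OF reds_eval_equiv[OF r_into_rtranclp[where r = red, OF red.red_beta]]]
        closed PQ by (simp add: closed_def)
    moreover have "(App (Lam B) Q, App N Q) \<in> eval_equiv"
      using eval_equiv_App[OF assms PQ(2)] .
    moreover have "reds (App N Q) (inst B' Q)"
      using reds_spine[OF N_eval, of "[Q]"] red.red_beta[of B' Q] by simp
    then have "(App N Q, inst B' Q) \<in> eval_equiv"
      using reds_eval_equiv closed PQ by (simp add: closed_def)
    ultimately show ?thesis using eval_equiv_trans by blast
  qed
  then show ?thesis using N_eval by blast
qed

lemma ctx_closure_sym:
  assumes "sym R" "(P, Q) \<in> ctx_closure R"
  shows "(Q, P) \<in> ctx_closure R"
proof -
  obtain C Ms Ns where PQ: "P = fill C Ms" "Q = fill C Ns" "length Ms = nholes C" "length Ns = nholes C"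
      "list_all2 (\<lambda>M N. (M, N) \<in> R) Ms Ns" "closed P" "closed Q"
    using assms(2) unfolding ctx_closure_def by blast
  have "list_all2 (\<lambda>M N. (M, N) \<in> R) Ns Ms"
    using PQ(5) assms(1) by (simp add: list_all2_conv_all_nth symD)
  then show ?thesis unfolding ctx_closure_def using PQ by blast
qed

lemma coupled_lb_eval_equiv: "coupled_lb eval_equiv eval_equiv"
  unfolding coupled_lb_def
proof (intro conjI allI impI)
  show "eval_equiv \<subseteq> eval_equiv" by simp
  show "\<forall>(M, N)\<in>eval_equiv. closed M \<and> closed N" by (rule eval_equiv_closed)
next
  fix M N M' assume "(M, N) \<in> eval_equiv" "red M M'"
  then show "\<exists>N'. reds N N' \<and> (M', N') \<in> eval_equiv"
    using eval_equiv_red by blast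
next
  fix M N B assume "(M, N) \<in> eval_equiv" "M = Lam B"
  then show "\<exists>B'. reds N (Lam B') \<and>
      (\<forall>P Q. (P, Q) \<in> ctx_closure eval_equiv \<longrightarrow> (inst B P, inst B' Q) \<in> eval_equiv)"
    using eval_equiv_Lam by blast
next
  fix M N N' assume "(M, N) \<in> eval_equiv" "red N N'"
  then show "\<exists>M'. reds M M' \<and> (M', N') \<in> eval_equiv"
    using eval_equiv_red eval_equiv_symD by blast
next
  fix M N B' assume "(M, N) \<in> eval_equiv" "N = Lam B'"
  then obtain B where "reds M (Lam B)"
      and body: "\<forall>P Q. (P, Q) \<in> ctx_closure eval_equiv \<longrightarrow> (inst B' P, inst B Q) \<in> eval_equiv"
    using eval_equiv_Lam eval_equiv_symD by blast
  moreover have "(inst B P, inst B' Q) \<in> eval_equiv" if "(P, Q) \<in> ctx_closure eval_equiv" for P Q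
    using body ctx_closure_sym[OF eval_equiv_sym that] eval_equiv_symD by blast
  ultimately show "\<exists>B. reds M (Lam B) \<and>
      (\<forall>P Q. (P, Q) \<in> ctx_closure eval_equiv \<longrightarrow> (inst B P, inst B' Q) \<in> eval_equiv)"
    by blast
qed

subsection \<open>Soundness: coupled logical bisimilarity is contained in eval_equiv\<close>

definition app_sim :: "trm rel \<Rightarrow> bool" where
  "app_sim S \<longleftrightarrow> (\<forall>M N. (M, N) \<in> S \<longrightarrow> closed M \<and> closed N \<and>
      (\<forall>M'. red M M' \<longrightarrow> (\<exists>N'. reds N N' \<and> (M', N') \<in> S)) \<and>
      (\<forall>B. M = Lam B \<longrightarrow> (\<exists>B'. reds N (Lam B') \<and> (\<forall>P. closed P \<longrightarrow> (inst B P, inst B' P) \<in> S))))"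

lemma app_sim_converges:
  assumes S: "app_sim S" and "(M, N) \<in> S" "\<forall>P\<in>set Ps. closed P" "converges (foldl App M Ps)"
  shows "converges (foldl App N Ps)"
proof -
  obtain n V where "(red ^^ n) (foldl App M Ps) V" "is_value V"
    using assms(4) converges_pow by blast
  with assms(2,3) show ?thesis
  proof (induction n arbitrary: M N Ps rule: less_induct)
    case (less n M N Ps)
    note MN = less.prems(1) and args = less.prems(2) and red_n = less.prems(3) and is_val = less.prems(4)
    have "closed M" using MN S by (simp add: app_sim_def)
    then consider (abs) B where "M = Lam B" | (step) M' where "red M M'" using progress by blast
    then show ?case
    proof cases
      case abs
      then obtain B' where N_eval: "reds N (Lam B')" and body: "\<forall>P. closed P \<longrightarrow> (inst B P, inst B' P) \<in> S"
        using MN S unfolding app_sim_def by blast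
      show ?thesis
      proof (cases Ps)
        case Nil
        have "closed N" using MN S by (simp add: app_sim_def)
        then have "closed (Lam B')" using N_eval reds_closed by blast
        then show ?thesis using N_eval Nil converges_Lam converges_reds_iff by simp
      next
        case (Cons P Ps')
        obtain m where m: "n = Suc m" "(red ^^ m) (foldl App (inst B P) Ps') V"
          using red_pow_det[OF red_n is_val] red_spine_beta abs Cons by blast
        then have "converges (foldl App (inst B' P) Ps')"
          using less.IH[of m "inst B P" "inst B' P" Ps'] body args is_val Cons by simp
        moreover have "reds (foldl App N Ps) (foldl App (inst B' P) Ps')"
          using rtranclp.rtrancl_into_rtrancl[OF reds_spine[OF N_eval] red_spine_beta] Cons by simp
        ultimately show ?thesis using converges_reds_iff by blast
      qed
    next
      case step
      then obtain N' where N': "reds N N'" "(M', N') \<in> S"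
        using MN S unfolding app_sim_def by blast
      obtain m where m: "n = Suc m" "(red ^^ m) (foldl App M' Ps) V"
        using red_pow_det[OF red_n is_val red_spine[OF step]] by blast
      have "converges (foldl App N' Ps)"
        using less.IH[of m M' N' Ps] m N'(2) args is_val by simp
      then show ?thesis using converges_reds_iff[OF reds_spine[OF N'(1)]] by blast
    qed
  qed
qed

lemma app_sim_sub_eval_equiv:
  assumes "app_sim S" "app_sim (S\<inverse>)"
  shows "S \<subseteq> eval_equiv"
proof clarify
  fix M N assume MN: "(M, N) \<in> S"
  then have closed: "closed M" "closed N" using assms(1) by (simp_all add: app_sim_def)
  have "converges (foldl App M Ps) \<longleftrightarrow> converges (foldl App N Ps)" if "\<forall>P\<in>set Ps. closed P" for Ps
    using app_sim_converges[OF assms(1) MN that] app_sim_converges[OF assms(2) _ that] MN by blast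
  then show "(M, N) \<in> eval_equiv" unfolding eval_equiv_iff using closed by blast
qed

lemma coupled_lbD:
  assumes "coupled_lb R1 R2" "(M, N) \<in> R2"
  shows "closed M" "closed N"
    and "red M M' \<Longrightarrow> \<exists>N'. reds N N' \<and> (M', N') \<in> R2"
    and "M = Lam B \<Longrightarrow> \<exists>B'. reds N (Lam B') \<and>
           (\<forall>P Q. (P, Q) \<in> ctx_closure R1 \<longrightarrow> (inst B P, inst B' Q) \<in> R2)"
    and "red N N' \<Longrightarrow> \<exists>M'. reds M M' \<and> (M', N') \<in> R2"
    and "N = Lam B' \<Longrightarrow> \<exists>B. reds M (Lam B) \<and>
           (\<forall>P Q. (P, Q) \<in> ctx_closure R1 \<longrightarrow> (inst B P, inst B' Q) \<in> R2)"
  using assms unfolding coupled_lb_def by blast+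

(* every closed term is related to itself by R^star (take the hole-free context) *)
lemma ctx_closure_refl: "closed P \<Longrightarrow> (P, P) \<in> ctx_closure R"
  unfolding ctx_closure_def by (intro CollectI exI[of _ "term_ctx P"] exI[of _ "[]"]) simp

(* both directions of the second component of a coupled logical bisimulation are
   applicative simulations, using the identity instances of R1^star *)
lemma coupled_lb_app_sim:
  assumes R: "coupled_lb R1 R2"
  shows "app_sim R2" "app_sim (R2\<inverse>)"
proof -
  show "app_sim R2"
    unfolding app_sim_def
  proof (intro allI impI conjI)
    fix M N assume MN: "(M, N) \<in> R2"
    show "closed M" "closed N" using coupled_lbD(1,2)[OF R MN] .
    show "\<exists>N'. reds N N' \<and> (M', N') \<in> R2" if "red M M'" for M'
      using coupled_lbD(3)[OF R MN that] .
    show "\<exists>B'. reds N (Lam B') \<and> (\<forall>P. closed P \<longrightarrow> (inst B P, inst B' P) \<in> R2)"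
      if "M = Lam B" for B
      using coupled_lbD(4)[OF R MN that] ctx_closure_refl by blast
  qed
  show "app_sim (R2\<inverse>)"
    unfolding app_sim_def
  proof (intro allI impI conjI)
    fix N M assume "(N, M) \<in> R2\<inverse>"
    then have MN: "(M, N) \<in> R2" by simp
    show "closed N" "closed M" using coupled_lbD(2,1)[OF R MN] .
    show "\<exists>M'. reds M M' \<and> (N', M') \<in> R2\<inverse>" if "red N N'" for N'
      using coupled_lbD(5)[OF R MN that] by blast
    show "\<exists>B. reds M (Lam B) \<and> (\<forall>P. closed P \<longrightarrow> (inst B' P, inst B P) \<in> R2\<inverse>)"
      if "N = Lam B'" for B'
      using coupled_lbD(6)[OF R MN that] ctx_closure_refl by blast
  qed
qed

lemma coupled_lb_sub_eval_equiv: "coupled_lb R1 R2 \<Longrightarrow> R2 \<subseteq> eval_equiv"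
  by (rule app_sim_sub_eval_equiv[OF coupled_lb_app_sim])

theorem mainTheorem8:
  shows "(approx1, approx2) = (ctx_equiv, eval_equiv) \<and>
         approx1 = ctx_equiv \<and> ctx_equiv = eval_equiv \<and> eval_equiv = approx2"
proof -
  have "approx2 \<subseteq> eval_equiv"
    unfolding approx2_def using coupled_lb_sub_eval_equiv by (intro Union_least) blast
  moreover have "eval_equiv \<subseteq> approx1"
    unfolding approx1_def using coupled_lb_eval_equiv by (intro Union_upper) blast
  moreover have "approx1 \<subseteq> approx2"
    unfolding approx1_def approx2_def coupled_lb_def by (intro Union_least) auto
  moreover have "ctx_equiv = eval_equiv"
    using ctx_equiv_sub_eval_equiv eval_equiv_sub_ctx_equiv by blast
  ultimately show ?thesis by blast
qed

end
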